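(* For the discrete-time one-item Grover search problem with $N>1$ and time step $\Delta\in(0,1]$, the minimum query time $T$ (an integer multiple of $\Delta$) for which there exists a protocol with $P_{win}=1$ is $$T=\Delta\left\lceil\frac{\arccos\frac{1}{\sqrt N}}{\arcsin\frac{2\sin(\pi\Delta/2)\sqrt{N-1}}{N}}\right\rceil.$$
   Context: Oracle-problem framework (discrete case). We are given finite-dimensional Hilbert spaces $\mathcal{A},\mathcal{M},\mathcal{M}'$, a pure state $|\psi_0\rangle\in\mathcal{A}$, a unitary $O$ on $\mathcal{A}\otimes\mathcal{M}$, a time step $\Delta>0$, and positive operators $\{\Pi_x\}$ on $\mathcal{A}\otimes\mathcal{M}'$. A protocol with query time $T$ (a multiple of $\Delta$) and success probability $P_{win}$ consists of positive operators $\rho(t)$ on $\mathcal{A}$ and $\tilde\rho(t)$ on $\mathcal{A}\otimes\mathcal{M}$ for $t\in\{0,\Delta,\dots,T\}$, and $\tilde\rho'$ on $\mathcal{A}\otimes\mathcal{M}'$, such that: - $\rho(0)=|\psi_0\rangle\langle\psi_0|$; - $\mathrm{Tr}_\mathcal{M}\tilde\rho(t)=\rho(t)$; - $\rho(t+\Delta)=\mathrm{Tr}_\mathcal{M}[O\tilde\rho(t)O^{-1}]$ for $t\le T-\Delta$; - $\mathrm{Tr}_{\mathcal{M}'}\tilde\rho'=\rho(T)$; - $P_{win}\le\mathrm{Tr}[\Pi_x\tilde\rho']$ for all $x$. One-item Grover search. Take $\mathcal{A}=\mathrm{span}\{|j\rangle:j\in\{1,\dots,N\}\}$ and $\mathcal{M}=\mathcal{M}'=\mathrm{span}\{|j\rangle:j\in\{0,\dots,N\}\}$.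 Set $|\psi_0\rangle=N^{-1/2}\sum_{j=1}^N|j\rangle$ and $O=O_\Delta=I-(1-e^{-i\pi\Delta})\sum_{j=1}^N|j\rangle\langle j|_\mathcal{A}\otimes|j\rangle\langle j|_\mathcal{M}$. The verification operators are $\Pi_j=N|j\rangle\langle j|_\mathcal{A}\otimes|j\rangle\langle j|_{\mathcal{M}'}$ for $j=1,\dots,N$. *)

theory Defs
  imports Complex_Main
begin

text \<open>Operators on a finite-dimensional Hilbert space with orthonormal basis indexed
  by a finite set I are represented by their matrix entries.\<close>
type_synonym 'i op = "'i \<Rightarrow> 'i \<Rightarrow> complex"

definition psd_on :: "'i set \<Rightarrow> 'i op \<Rightarrow> bool" where
  "psd_on I X \<longleftrightarrow> (\<forall>v :: 'i \<Rightarrow> complex.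
     Im (\<Sum>i\<in>I. \<Sum>j\<in>I. cnj (v i) * X i j * v j) = 0 \<and>
     Re (\<Sum>i\<in>I. \<Sum>j\<in>I. cnj (v i) * X i j * v j) \<ge> 0)"

definition ptrace :: "'b set \<Rightarrow> ('a \<times> 'b) op \<Rightarrow> 'a op" where
  "ptrace B X = (\<lambda>a a'. \<Sum>b\<in>B. X (a, b) (a', b))"

text \<open>Conjugation U X U^{-1} for a unitary U, where U^{-1} = U^* (adjoint).\<close>
definition conj_by :: "'i set \<Rightarrow> 'i op \<Rightarrow> 'i op \<Rightarrow> 'i op" where
  "conj_by S U X = (\<lambda>x y. \<Sum>u\<in>S. \<Sum>w\<in>S. U x u * X u w * cnj (U y w))"

definition op_comp :: "'i set \<Rightarrow> 'i op \<Rightarrow> 'i op \<Rightarrow> 'i op" where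
  "op_comp S P X = (\<lambda>x y. \<Sum>z\<in>S. P x z * X z y)"

definition op_trace :: "'i set \<Rightarrow> 'i op \<Rightarrow> complex" where
  "op_trace S X = (\<Sum>x\<in>S. X x x)"

text \<open>General discrete oracle-problem protocol with K time steps (query time T = K * Delta);
  time t = k * Delta is indexed by k in {0..K}.  rho k acts on A, rhot k on A (x) M,
  rho' on A (x) M'.\<close>
definition is_protocol ::
  "'a set \<Rightarrow> 'm set \<Rightarrow> 'n set \<Rightarrow> ('a \<Rightarrow> complex) \<Rightarrow> ('a \<times> 'm) op \<Rightarrow> ('a \<times> 'n) op set
   \<Rightarrow> nat \<Rightarrow> real \<Rightarrow> (nat \<Rightarrow> 'a op) \<Rightarrow> (nat \<Rightarrow> ('a \<times> 'm) op) \<Rightarrow> ('a \<times> 'n) op \<Rightarrow> bool" where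
  "is_protocol A M M' psi0 U Pis K Pwin \<rho> \<rho>t \<rho>' \<longleftrightarrow>
     (\<forall>k\<le>K. psd_on A (\<rho> k) \<and> psd_on (A \<times> M) (\<rho>t k)) \<and> psd_on (A \<times> M') \<rho>' \<and>
     (\<forall>a\<in>A. \<forall>b\<in>A. \<rho> 0 a b = psi0 a * cnj (psi0 b)) \<and>
     (\<forall>k\<le>K. \<forall>a\<in>A. \<forall>b\<in>A. ptrace M (\<rho>t k) a b = \<rho> k a b) \<and>
     (\<forall>k<K. \<forall>a\<in>A. \<forall>b\<in>A. ptrace M (conj_by (A \<times> M) U (\<rho>t k)) a b = \<rho> (Suc k) a b) \<and>
     (\<forall>a\<in>A. \<forall>b\<in>A. ptrace M' \<rho>' a b = \<rho> K a b) \<and>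
     (\<forall>P\<in>Pis. Pwin \<le> Re (op_trace (A \<times> M') (op_comp (A \<times> M') P \<rho>')))"

definition grover_psi0 :: "nat \<Rightarrow> nat \<Rightarrow> complex" where
  "grover_psi0 N j = complex_of_real (1 / sqrt (real N))"

definition grover_oracle :: "nat \<Rightarrow> real \<Rightarrow> (nat \<times> nat) op" where
  "grover_oracle N \<Delta> = (\<lambda>(i, m) (i', m').
     (if (i, m) = (i', m') then 1 else 0)
     - (if i = m \<and> i' = m' \<and> i = i' \<and> i \<in> {1..N}
        then 1 - exp (- \<i> * complex_of_real (pi * \<Delta>)) else 0))"

definition grover_Pi :: "nat \<Rightarrow> nat \<Rightarrow> (nat \<times> nat) op" where
  "grover_Pi N j = (\<lambda>x y. if x = (j, j) \<and> y = (j, j) then of_nat N else 0)"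

definition grover_protocol ::
  "nat \<Rightarrow> real \<Rightarrow> nat \<Rightarrow> real \<Rightarrow> (nat \<Rightarrow> nat op) \<Rightarrow> (nat \<Rightarrow> (nat \<times> nat) op) \<Rightarrow> (nat \<times> nat) op \<Rightarrow> bool" where
  "grover_protocol N \<Delta> K Pwin \<rho> \<rho>t \<rho>' \<longleftrightarrow>
     is_protocol {1..N} {0..N} {0..N} (grover_psi0 N) (grover_oracle N \<Delta>)
       (grover_Pi N ` {1..N}) K Pwin \<rho> \<rho>t \<rho>'"

end

(*
  Write F(rho) = <psi0|rho|psi0> for the overlap of a register state with the initial state and
  measure progress by the angle arccos (sqrt F).

  Lower bound: one query increases this angle by at most
  beta = arcsin (2 sin (pi Delta / 2) sqrt (N - 1) / N).  For a state at angle a, the coefficients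
  c1 = dual_c1 a beta and c0 = dual_c0 a beta make  g g^*/N - c1 |psi0><psi0| - c0 I  positive
  semidefinite on every memory block, where g is the diagonal of the oracle on that block (an
  explicit Gram decomposition).  Pairing these matrices with the blocks of the purification gives
  F' >= c1 F + c0 >= cos^2 (a + beta).  A protocol that wins with certainty ends in the register
  state I/N, whose overlap is 1/N = cos^2 alpha with alpha = arccos (1 / sqrt N); hence
  K beta >= alpha.

  Upper bound: purifications of the form ansatz N z x y are mapped by the oracle to states of the
  same form in which only y changes, and their register state depends only on |y|.  Choosing the
  phase of x suitably, |y| follows sin (k beta) / sin alpha, which reaches 1 after
  ceil (alpha / beta) queries; the resulting purification wins with certainty.
*)
theory Submission
  imports Defs
begin

section \<open>Positive operators\<close>

definition quad_form :: "'i set \<Rightarrow> 'i op \<Rightarrow> ('i \<Rightarrow> complex) \<Rightarrow> complex" where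
  "quad_form S X v = (\<Sum>i\<in>S. \<Sum>j\<in>S. cnj (v i) * X i j * v j)"

lemma psd_onD:
  assumes "psd_on S X"
  shows "Im (quad_form S X v) = 0" "Re (quad_form S X v) \<ge> 0"
  using assms unfolding psd_on_def quad_form_def by auto

lemma psd_onI:
  assumes "\<And>v. Im (quad_form S X v) = 0 \<and> Re (quad_form S X v) \<ge> 0"
  shows "psd_on S X"
  using assms unfolding psd_on_def quad_form_def by auto

lemma quad_form_inner_sum: "quad_form S X v = (\<Sum>i\<in>S. cnj (v i) * (\<Sum>j\<in>S. X i j * v j))"
  unfolding quad_form_def by (simp add: sum_distrib_left mult.assoc)

lemma cnj_mult_self: "cnj z * z = of_real ((cmod z)\<^sup>2)"
  by (metis complex_norm_square mult.commute)

lemma quad_form_two_point: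
  assumes "finite S" "x \<in> S" "y \<in> S"
  shows "quad_form S X (\<lambda>i. (if i = x then r else 0) + (if i = y then t else 0)) =
     cnj r * X x x * r + cnj r * X x y * t + cnj t * X y x * r + cnj t * X y y * t"
  using assms unfolding quad_form_inner_sum
  by (simp add: distrib_left distrib_right sum.distrib if_distrib[of "\<lambda>u. _ * u"]
      if_distrib[of "\<lambda>u. u * _"] if_distrib[of cnj] cong: if_cong)

lemma psd_on_diag:
  assumes "psd_on S X" "finite S" "x \<in> S"
  shows "Im (X x x) = 0" "Re (X x x) \<ge> 0"
  using psd_onD[OF assms(1), of "\<lambda>i. if i = x then 1 else 0"]
    quad_form_two_point[OF assms(2,3,3), of X 1 0] by auto

lemma psd_on_hermitian:
  assumes "psd_on S X" "finite S" "x \<in> S" "y \<in> S"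
  shows "X y x = cnj (X x y)"
proof -
  have "Im (X x x + X x y * t + cnj t * X y x + cnj t * X y y * t) = 0" for t
    using psd_onD(1)[OF assms(1), of "\<lambda>i. (if i = x then 1 else 0) + (if i = y then t else 0)"]
    unfolding quad_form_two_point[OF assms(2-4)] by simp
  from this[of 1] this[of \<i>] show ?thesis
    using psd_on_diag(1)[OF assms(1,2)] assms(3,4) by (simp add: complex_eq_iff)
qed

lemma psd_on_zero_diag:
  assumes "psd_on S X" "finite S" "x \<in> S" "y \<in> S" "X x x = 0"
  shows "X x y = 0" "X y x = 0"
proof -
  define w where "w = X x y"
  have herm: "X y x = cnj w" unfolding w_def by (rule psd_on_hermitian[OF assms(1-4)])
  have "0 \<le> Re (X y y) - 2 * s * (cmod w)\<^sup>2" if "s \<ge> 0" for s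
  proof -
    have "0 \<le> Re (quad_form S X (\<lambda>i. (if i = x then - of_real s * w else 0) + (if i = y then 1 else 0)))"
      by (rule psd_onD(2)[OF assms(1)])
    also have "\<dots> = Re (X y y) - 2 * s * (cmod w)\<^sup>2"
      unfolding quad_form_two_point[OF assms(2-4)] herm assms(5) w_def[symmetric]
      by (simp add: cmod_power2) (simp add: algebra_simps power2_eq_square)
    finally show ?thesis .
  qed
  from this[of "(Re (X y y) + 1) / (2 * (cmod w)\<^sup>2)"] have "w = 0"
    using psd_on_diag(2)[OF assms(1,2,4)] by (cases "w = 0") (auto simp: field_simps)
  then show "X x y = 0" "X y x = 0" using herm by (simp_all add: w_def)
qed

lemma quad_form_block:
  assumes "finite M" "m \<in> M"
  shows "quad_form (A \<times> M) X (\<lambda>(a, m'). if m' = m then v a else 0) = quad_form A (\<lambda>a b. X (a, m) (b, m)) v"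
proof -
  have if_sum: "(\<Sum>b\<in>A. if P then f b else 0) = (if P then sum f A else 0)" for P and f :: "_ \<Rightarrow> complex"
    by simp
  show ?thesis
    using assms unfolding quad_form_def
    by (simp add: if_sum sum.cartesian_product' if_distrib[of "\<lambda>u. _ * u"] if_distrib[of "\<lambda>u. u * _"] if_distrib[of cnj] cong: if_cong)
qed

lemma psd_on_block:
  assumes "psd_on (A \<times> M) X" "finite M" "m \<in> M"
  shows "psd_on A (\<lambda>a b. X (a, m) (b, m))"
proof (rule psd_onI)
  fix v
  show "Im (quad_form A (\<lambda>a b. X (a, m) (b, m)) v) = 0 \<and> Re (quad_form A (\<lambda>a b. X (a, m) (b, m)) v) \<ge> 0"
    using psd_onD[OF assms(1), of "\<lambda>(a, m'). if m' = m then v a else 0"]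
    unfolding quad_form_block[OF assms(2,3)] by simp
qed

lemma quad_form_ptrace: "quad_form A (ptrace M X) v = (\<Sum>m\<in>M. quad_form A (\<lambda>a b. X (a, m) (b, m)) v)"
  unfolding quad_form_def ptrace_def
  by (simp add: sum_distrib_left sum_distrib_right sum.swap[of _ M] mult.assoc)

lemma psd_on_ptrace:
  assumes "psd_on (A \<times> M) X" "finite M"
  shows "psd_on A (ptrace M X)"
  using psd_onD[OF psd_on_block[OF assms]]
  by (intro psd_onI) (simp add: quad_form_ptrace sum_nonneg)

definition outer :: "('i \<Rightarrow> complex) \<Rightarrow> 'i op" where
  "outer f = (\<lambda>x y. f x * cnj (f y))"

lemma quad_form_outer: "quad_form S (outer f) v = of_real ((cmod (\<Sum>i\<in>S. cnj (v i) * f i))\<^sup>2)"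
  unfolding quad_form_def outer_def complex_norm_square
  by (simp add: sum_distrib_left sum_distrib_right mult_ac) (subst sum.swap, simp add: mult_ac)

lemma psd_on_outer: "psd_on S (outer f)"
  by (rule psd_onI) (simp add: quad_form_outer)

lemma ptrace_outer: "ptrace M (outer f) a b = (\<Sum>m\<in>M. f (a, m) * cnj (f (b, m)))"
  unfolding ptrace_def outer_def ..

lemma conj_by_diagonal:
  assumes "finite S" "\<And>x u. x \<noteq> u \<Longrightarrow> U x u = 0" "x \<in> S" "y \<in> S"
  shows "conj_by S U X x y = U x x * X x y * cnj (U y y)"
proof -
  have "conj_by S U X x y = (\<Sum>u\<in>S. if u = x then (\<Sum>w\<in>S. U x u * X u w * cnj (U y w)) else 0)"
    unfolding conj_by_def using assms(2) by (intro sum.cong refl) auto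
  also have "\<dots> = (\<Sum>w\<in>S. U x x * X x w * cnj (U y w))"
    using assms by simp
  also have "\<dots> = (\<Sum>w\<in>S. if w = y then U x x * X x w * cnj (U y w) else 0)"
    using assms(2) by (intro sum.cong refl) auto
  also have "\<dots> = U x x * X x y * cnj (U y y)"
    using assms by simp
  finally show ?thesis .
qed

lemma psd_on_gram_pairing:
  assumes "psd_on S X" "finite C"
  shows "Re (\<Sum>i\<in>S. \<Sum>j\<in>S. X i j * (\<Sum>c\<in>C. cnj (v c i) * v c j)) \<ge> 0"
proof -
  have "(\<Sum>i\<in>S. \<Sum>j\<in>S. X i j * (\<Sum>c\<in>C. cnj (v c i) * v c j)) = (\<Sum>c\<in>C. quad_form S X (v c))"
    unfolding quad_form_def by (simp add: sum_distrib_left sum.swap[of _ C] mult_ac)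
  then show ?thesis using psd_onD(2)[OF assms(1)] by (simp add: sum_nonneg)
qed

(* The orthogonal projection onto the vectors supported on S with coordinate sum zero. *)
definition centering :: "'a set \<Rightarrow> 'a \<Rightarrow> 'a \<Rightarrow> real" where
  "centering S a b = (if a \<in> S \<and> b \<in> S then of_bool (a = b) - 1 / real (card S) else 0)"

lemma centering_gram:
  assumes "finite S" "S \<noteq> {}"
  defines "u \<equiv> \<lambda>x. if x \<in> S then 1 / real (card S) else 0"
  shows "(\<Sum>c\<in>S. (of_bool (a = c) - u a) * (of_bool (b = c) - u b)) = centering S a b"
proof (cases "a \<in> S \<and> b \<in> S")
  case True
  have "card S > 0" using assms(1,2) by (simp add: card_gt_0_iff)
  have one: "(\<Sum>c\<in>S. of_bool (x = c)) = (1 :: real)" if "x \<in> S" for x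
    using that assms(1) by (simp add: of_bool_def)
  have two: "(\<Sum>c\<in>S. of_bool (a = c \<and> b = c)) = (of_bool (a = b) :: real)"
    using True assms(1) by (cases "a = b") (auto simp: of_bool_def intro: sum.neutral)
  have "(\<Sum>c\<in>S. (of_bool (a = c) - u a) * (of_bool (b = c) - u b))
      = (\<Sum>c\<in>S. of_bool (a = c \<and> b = c)) - u b * (\<Sum>c\<in>S. of_bool (a = c))
        - u a * (\<Sum>c\<in>S. of_bool (b = c)) + card S * u a * u b"
    by (simp add: algebra_simps of_bool_conj sum.distrib sum_subtractf sum_distrib_left)
  also have "\<dots> = centering S a b"
    using True \<open>card S > 0\<close> by (simp add: one two u_def centering_def field_simps)
  finally show ?thesis .
next
  case False
  then show ?thesis unfolding u_def centering_def by (auto intro!: sum.neutral)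
qed

lemma psd_on_pairing_rank_one_plus_centering:
  assumes "psd_on A X" "finite S" "S \<noteq> {}" "d \<ge> 0"
  shows "Re (\<Sum>a\<in>A. \<Sum>b\<in>A. X a b * (cnj (w a) * w b + of_real (d * centering S a b))) \<ge> 0"
proof -
  define u where "u x = (if x \<in> S then 1 / real (card S) else 0)" for x
  define v where "v c a = (case c of None \<Rightarrow> w a | Some c \<Rightarrow> of_real (sqrt d * (of_bool (a = c) - u a)))" for c a
  have "cnj (w a) * w b + of_real (d * centering S a b) = (\<Sum>c\<in>insert None (Some ` S). cnj (v c a) * v c b)" for a b
  proof -
    have "(\<Sum>c\<in>Some ` S. cnj (v c a) * v c b) = of_real (d * (\<Sum>c\<in>S. (of_bool (a = c) - u a) * (of_bool (b = c) - u b)))"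
    proof -
      have sq: "sqrt d * x * (sqrt d * y) = d * (x * y)" for x y
        using assms(4) by (simp add: algebra_simps flip: power2_eq_square)
      show ?thesis by (simp add: sum.reindex v_def sum_distrib_left flip: of_real_mult) (simp only: sq)
    qed
    then show ?thesis
      using assms(2) unfolding centering_gram[OF assms(2,3), folded u_def] by (simp add: v_def)
  qed
  then show ?thesis
    using psd_on_gram_pairing[OF assms(1), of "insert None (Some ` S)" v] assms(2) by simp
qed

lemma ptrace_offdiag_eq_0_if_diagonal_concentrated:
  fixes X :: "('a \<times> 'a) op"
  assumes psd: "psd_on (A \<times> M) X" and fin: "finite A" "finite M" and "A \<subseteq> M"
    and conc: "Re (\<Sum>x\<in>A \<times> M. X x x) \<le> Re (\<Sum>j\<in>A. X (j, j) (j, j))"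
    and ab: "a \<in> A" "b \<in> A" "a \<noteq> b"
  shows "ptrace M X a b = 0"
proof -
  let ?D = "(\<lambda>j. (j, j)) ` A"
  have fin_AM: "finite (A \<times> M)" using fin by simp
  have D_sub: "?D \<subseteq> A \<times> M" using \<open>A \<subseteq> M\<close> by auto
  have nonneg: "Re (X x x) \<ge> 0" if "x \<in> A \<times> M" for x
    using psd_on_diag(2)[OF psd fin_AM that] .
  have "(\<Sum>x\<in>?D. Re (X x x)) = Re (\<Sum>j\<in>A. X (j, j) (j, j))"
    by (simp add: sum.reindex inj_on_def)
  then have "(\<Sum>x\<in>A \<times> M - ?D. Re (X x x)) \<le> 0"
    using conc sum.subset_diff[OF D_sub fin_AM, of "\<lambda>x. Re (X x x)"] by simp
  then have "(\<Sum>x\<in>A \<times> M - ?D. Re (X x x)) = 0"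
    using nonneg by (intro antisym sum_nonneg) auto
  then have "Re (X x x) = 0" if "x \<in> A \<times> M - ?D" for x
    using sum_nonneg_eq_0_iff[of "A \<times> M - ?D" "\<lambda>x. Re (X x x)"] nonneg fin_AM that by auto
  then have zero: "X x x = 0" if "x \<in> A \<times> M - ?D" for x
    using psd_on_diag(1)[OF psd fin_AM] that by (simp add: complex_eq_iff)
  have "X (a, m) (b, m) = 0" if m: "m \<in> M" for m
  proof (cases "m = a")
    case True
    with ab m show ?thesis using psd_on_zero_diag(2)[OF psd fin_AM _ _ zero, of "(b, m)" "(a, m)"] by auto
  next
    case False
    with ab m show ?thesis using psd_on_zero_diag(1)[OF psd fin_AM _ _ zero, of "(a, m)" "(b, m)"] by auto
  qed
  then show ?thesis unfolding ptrace_def by simp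
qed

section \<open>Dual certificates\<close>

lemma dual_pairing_bound:
  fixes Y :: "'a op" and n c0 c1 :: real
  assumes psd: "psd_on A Y" and "finite A" "finite S" "S \<noteq> {}" "c0 \<le> 0"
    and dual: "\<And>a b. a \<in> A \<Longrightarrow> b \<in> A \<Longrightarrow>
       (g a * cnj (g b) - of_real c1) / of_real n - of_real c0 * of_bool (a = b)
         = cnj (w a) * w b + of_real (- c0 * centering S a b)"
  shows "c1 * Re (\<Sum>a\<in>A. \<Sum>b\<in>A. Y a b) / n + c0 * Re (\<Sum>a\<in>A. Y a a)
    \<le> Re (\<Sum>a\<in>A. \<Sum>b\<in>A. g a * Y a b * cnj (g b)) / n"
proof -
  have "0 \<le> Re (\<Sum>a\<in>A. \<Sum>b\<in>A. Y a b * (cnj (w a) * w b + of_real (- c0 * centering S a b)))"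
    by (rule psd_on_pairing_rank_one_plus_centering[OF psd assms(3,4)]) (use assms(5) in simp)
  also have "(\<Sum>a\<in>A. \<Sum>b\<in>A. Y a b * (cnj (w a) * w b + of_real (- c0 * centering S a b)))
    = (\<Sum>a\<in>A. \<Sum>b\<in>A. Y a b * ((g a * cnj (g b) - of_real c1) / of_real n - of_real c0 * of_bool (a = b)))"
    using dual by simp
  also have "\<dots> = (\<Sum>a\<in>A. \<Sum>b\<in>A. g a * Y a b * cnj (g b)) / of_real n
      - of_real c1 * (\<Sum>a\<in>A. \<Sum>b\<in>A. Y a b) / of_real n - of_real c0 * (\<Sum>a\<in>A. Y a a)"
    using assms(2)
    by (simp add: algebra_simps diff_divide_distrib sum.distrib sum_subtractf sum_divide_distrib sum_distrib_left of_bool_def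
        if_distrib[of "\<lambda>u. _ * u"] cong: if_cong)
  finally show ?thesis by (simp add: divide_right_mono)
qed

lemma unmarked_block_bound:
  fixes N :: nat and c0 c1 :: real
  assumes psd: "psd_on {1..N} Y" and "N \<ge> 1" "c0 \<le> 0" "1 - c1 - c0 \<ge> 0"
  shows "c1 * Re (\<Sum>a\<in>{1..N}. \<Sum>b\<in>{1..N}. Y a b) / N + c0 * Re (\<Sum>a\<in>{1..N}. Y a a)
    \<le> Re (\<Sum>a\<in>{1..N}. \<Sum>b\<in>{1..N}. Y a b) / N"
proof -
  define w where "w = complex_of_real (sqrt ((1 - c1 - c0) / N))"
  have w_sq: "cnj w * w = of_real ((1 - c1 - c0) / N)"
    using assms(4) by (simp add: w_def flip: of_real_mult)
  have "(1 * cnj 1 - of_real c1) / of_real N - of_real c0 * of_bool (a = b)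
      = cnj w * w + of_real (- c0 * centering {1..N} a b)" if "a \<in> {1..N}" "b \<in> {1..N}" for a b
    using that assms(2) unfolding w_sq centering_def by (simp add: field_simps)
  from dual_pairing_bound[OF psd _ _ _ assms(3), of "{1..N}" "\<lambda>_. 1" c1 "real N" "\<lambda>_. w", OF _ _ _ this]
  show ?thesis using assms(2) by simp
qed

lemma marked_dual_gram:
  fixes N :: nat and c0 c1 :: real and lam :: complex
  assumes N: "N \<ge> 2" and m: "m \<in> {1..N}" and lam: "cmod lam = 1" and pos: "(1 - c1) / N - c0 > 0"
    and ident: "(cmod (lam - c1))\<^sup>2 = (real N)\<^sup>2 * ((1 - c1) / N - c0) * ((1 - c1) / N - c0 / (real N - 1))"
    and ab: "a \<in> {1..N}" "b \<in> {1..N}"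
  defines "g \<equiv> \<lambda>a. if a = m then lam else 1"
    and "z1 \<equiv> complex_of_real (sqrt ((1 - c1) / N - c0))"
    and "z2 \<equiv> (lam - of_real c1) / (of_nat N * complex_of_real (sqrt ((1 - c1) / N - c0)))"
  shows "(g a * cnj (g b) - of_real c1) / of_real N - of_real c0 * of_bool (a = b)
      = cnj (if a = m then z1 else z2) * (if b = m then z1 else z2) + of_real (- c0 * centering ({1..N} - {m}) a b)"
proof -
  have z1_sq: "cnj z1 * z1 = of_real ((1 - c1) / N - c0)" and "z1 \<noteq> 0" and "cnj z1 = z1"
    using pos by (simp_all add: z1_def flip: of_real_mult)
  have z2: "z2 = (lam - of_real c1) / (of_nat N * z1)" unfolding z1_def z2_def ..
  have "cnj z2 * z2 = (cnj (lam - of_real c1) * (lam - of_real c1)) / (cnj (of_nat N * z1) * (of_nat N * z1))"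
    unfolding z2 by (simp add: field_simps)
  also have "\<dots> = of_real ((cmod (lam - c1))\<^sup>2 / (cmod (of_nat N * z1))\<^sup>2)"
    unfolding cnj_mult_self by simp
  also have "(cmod (of_nat N * z1))\<^sup>2 = (real N)\<^sup>2 * ((1 - c1) / N - c0)"
    using pos by (simp add: z1_def norm_mult power_mult_distrib)
  also have "(cmod (lam - c1))\<^sup>2 / ((real N)\<^sup>2 * ((1 - c1) / N - c0)) = (1 - c1) / N - c0 / (real N - 1)"
    using pos N unfolding ident by simp
  finally have z2_sq: "cnj z2 * z2 = of_real ((1 - c1) / N - c0 / (real N - 1))" .
  have "cnj z1 * z2 = (lam - of_real c1) / of_nat N" "cnj z2 * z1 = (cnj lam - of_real c1) / of_nat N"
    using \<open>z1 \<noteq> 0\<close> \<open>cnj z1 = z1\<close> by (simp_all add: z2)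
  moreover have "lam * cnj lam = 1"
    using lam by (simp add: complex_norm_square[symmetric])
  moreover have "card ({1..N} - {m}) = N - 1" using m by simp
  ultimately show ?thesis
    using ab N z1_sq z2_sq
    by (cases "a = m"; cases "b = m") (simp_all add: g_def centering_def field_simps)
qed

lemma marked_block_bound:
  fixes N :: nat and c0 c1 :: real and lam :: complex
  assumes psd: "psd_on {1..N} Y" and N: "N \<ge> 2" and m: "m \<in> {1..N}" and lam: "cmod lam = 1"
    and c0: "c0 \<le> 0" and pos: "(1 - c1) / N - c0 > 0"
    and ident: "(cmod (lam - c1))\<^sup>2 = (real N)\<^sup>2 * ((1 - c1) / N - c0) * ((1 - c1) / N - c0 / (real N - 1))"
  defines "g \<equiv> \<lambda>a. if a = m then lam else 1"
  shows "c1 * Re (\<Sum>a\<in>{1..N}. \<Sum>b\<in>{1..N}. Y a b) / N + c0 * Re (\<Sum>a\<in>{1..N}. Y a a)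
    \<le> Re (\<Sum>a\<in>{1..N}. \<Sum>b\<in>{1..N}. g a * Y a b * cnj (g b)) / N"
proof -
  have "(if m = 1 then 2 else 1) \<in> {1..N} - {m}" using N by auto
  then have S_ne: "{1..N} - {m} \<noteq> {}" by blast
  show ?thesis unfolding g_def
    by (rule dual_pairing_bound[OF psd _ _ S_ne c0 marked_dual_gram[OF N m lam pos ident]]) simp_all
qed

definition dual_c1 :: "real \<Rightarrow> real \<Rightarrow> real" where
  "dual_c1 a b = sin (a + b) * cos (a + b) / (sin a * cos a)"

definition dual_c0 :: "real \<Rightarrow> real \<Rightarrow> real" where
  "dual_c0 a b = - cos (a + b) * sin b / sin a"

lemma one_minus_dual_coeffs:
  assumes S: "sin a > 0" and C: "cos a > 0"
  shows "1 - dual_c1 a b - dual_c0 a b = sin b * sin (a + b) / cos a"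
proof -
  have "dual_c1 a b + dual_c0 a b = cos (a + b) * (sin (a + b) - cos a * sin b) / (sin a * cos a)"
    unfolding dual_c1_def dual_c0_def using S C by (simp add: field_simps)
  also have "sin (a + b) - cos a * sin b = sin a * cos b" by (simp add: sin_add)
  finally have "1 - dual_c1 a b - dual_c0 a b = (cos a - cos (a + b) * cos b) / cos a"
    using S C by (simp add: field_simps)
  also have "cos a - cos (a + b) * cos b = cos a * (1 - (cos b)\<^sup>2) + sin a * sin b * cos b"
    by (simp add: cos_add algebra_simps power2_eq_square)
  also have "1 - (cos b)\<^sup>2 = (sin b)\<^sup>2" by (simp add: sin_squared_eq)
  also have "cos a * (sin b)\<^sup>2 + sin a * sin b * cos b = sin b * sin (a + b)"
    by (simp add: sin_add algebra_simps power2_eq_square)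
  finally show ?thesis .
qed

lemma dual_coeffs_cos_sq:
  assumes S: "sin a > 0" and C: "cos a > 0"
  shows "dual_c1 a b * (cos a)\<^sup>2 + dual_c0 a b = (cos (a + b))\<^sup>2"
proof -
  have "dual_c1 a b * (cos a)\<^sup>2 + dual_c0 a b = cos (a + b) * (sin (a + b) * cos a - sin b) / sin a"
    unfolding dual_c1_def dual_c0_def using S C by (simp add: field_simps power2_eq_square)
  also have "sin (a + b) * cos a - sin b = sin a * cos b * cos a - sin b * (1 - (cos a)\<^sup>2)"
    by (simp add: sin_add algebra_simps power2_eq_square)
  also have "1 - (cos a)\<^sup>2 = (sin a)\<^sup>2" by (simp add: sin_squared_eq)
  also have "sin a * cos b * cos a - sin b * (sin a)\<^sup>2 = sin a * cos (a + b)"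
    by (simp add: cos_add algebra_simps power2_eq_square)
  finally show ?thesis using S by (simp add: power2_eq_square)
qed

lemma dual_coeffs_identity:
  fixes n s :: real
  assumes S: "sin a > 0" and C: "cos a > 0" and n: "n > 1"
    and sin_b: "(sin b)\<^sup>2 * n\<^sup>2 = 4 * s\<^sup>2 * (n - 1)"
  defines "c1 \<equiv> dual_c1 a b" and "c0 \<equiv> dual_c0 a b"
  shows "(1 - c1)\<^sup>2 + 4 * s\<^sup>2 * c1 = n\<^sup>2 * ((1 - c1) / n - c0) * ((1 - c1) / n - c0 / (n - 1))"
proof -
  have "c0 * (c0 + c1 - 1) = (- cos (a + b) * sin b / sin a) * (- (sin b * sin (a + b) / cos a))"
    using one_minus_dual_coeffs[OF S C, of b] unfolding c0_def c1_def dual_c0_def by (simp add: algebra_simps)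
  also have "\<dots> = c1 * (sin b)\<^sup>2"
    unfolding c1_def dual_c1_def using S C by (simp add: field_simps power2_eq_square)
  finally have c0_c1: "c0 * (c0 + c1 - 1) = c1 * (sin b)\<^sup>2" .
  have "n\<^sup>2 * ((1 - c1) / n - c0) * ((1 - c1) / n - c0 / (n - 1))
      = (1 - c1)\<^sup>2 + n\<^sup>2 * (c0 * (c0 + c1 - 1)) / (n - 1)"
    using n by (simp add: field_simps power2_eq_square)
  also have "\<dots> = (1 - c1)\<^sup>2 + c1 * ((sin b)\<^sup>2 * n\<^sup>2) / (n - 1)"
    unfolding c0_c1 by (simp add: algebra_simps)
  also have "\<dots> = (1 - c1)\<^sup>2 + 4 * s\<^sup>2 * c1"
    unfolding sin_b using n by (simp add: field_simps)
  finally show ?thesis by simp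
qed

section \<open>The Grover oracle and the ansatz states\<close>

definition oracle_phase :: "real \<Rightarrow> complex" where
  "oracle_phase \<Delta> = exp (- \<i> * complex_of_real (pi * \<Delta>))"

lemma norm_oracle_phase: "cmod (oracle_phase \<Delta>) = 1"
  unfolding oracle_phase_def by simp

lemma oracle_phase_mult_cnj: "oracle_phase \<Delta> * cnj (oracle_phase \<Delta>) = 1"
  using complex_norm_square[of "oracle_phase \<Delta>"] by (simp add: norm_oracle_phase)

lemma norm_oracle_phase_diff_real:
  "(cmod (oracle_phase \<Delta> - of_real c))\<^sup>2 = (1 - c)\<^sup>2 + 4 * (sin (pi * \<Delta> / 2))\<^sup>2 * c"
proof -
  have "(cmod (oracle_phase \<Delta> - of_real c))\<^sup>2 = (cos (pi * \<Delta>) - c)\<^sup>2 + (sin (pi * \<Delta>))\<^sup>2"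
    by (simp add: cmod_power2 oracle_phase_def Re_exp Im_exp)
  also have "(sin (pi * \<Delta>))\<^sup>2 = 1 - (cos (pi * \<Delta>))\<^sup>2"
    by (simp add: sin_squared_eq)
  also have "cos (pi * \<Delta>) = 1 - 2 * (sin (pi * \<Delta> / 2))\<^sup>2"
    using cos_double_sin[of "pi * \<Delta> / 2"] by simp
  finally show ?thesis by (simp add: algebra_simps power2_eq_square)
qed

lemma norm_oracle_phase_diff_one:
  assumes "0 \<le> \<Delta>" "\<Delta> \<le> 1"
  shows "cmod (oracle_phase \<Delta> - 1) = 2 * sin (pi * \<Delta> / 2)"
proof (rule power2_eq_imp_eq)
  show "(cmod (oracle_phase \<Delta> - 1))\<^sup>2 = (2 * sin (pi * \<Delta> / 2))\<^sup>2"
    using norm_oracle_phase_diff_real[of \<Delta> 1] by (simp add: power_mult_distrib)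
  show "0 \<le> 2 * sin (pi * \<Delta> / 2)"
    using assms by (simp add: sin_ge_zero)
qed simp

abbreviation oracle_query :: "nat \<Rightarrow> real \<Rightarrow> (nat \<times> nat) op \<Rightarrow> (nat \<times> nat) op" where
  "oracle_query N \<Delta> \<equiv> conj_by ({1..N} \<times> {0..N}) (grover_oracle N \<Delta>)"

definition oracle_diag :: "real \<Rightarrow> nat \<Rightarrow> nat \<Rightarrow> complex" where
  "oracle_diag \<Delta> m a = (if a = m then oracle_phase \<Delta> else 1)"

lemma grover_oracle_offdiag: "x \<noteq> y \<Longrightarrow> grover_oracle N \<Delta> x y = 0"
  unfolding grover_oracle_def by (cases x; cases y) auto

lemma grover_oracle_diag: "a \<in> {1..N} \<Longrightarrow> grover_oracle N \<Delta> (a, m) (a, m) = oracle_diag \<Delta> m a"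
  unfolding grover_oracle_def oracle_diag_def oracle_phase_def by auto

lemma ptrace_conj_grover_oracle:
  assumes "a \<in> {1..N}" "b \<in> {1..N}"
  shows "ptrace {0..N} (oracle_query N \<Delta> X) a b
     = (\<Sum>m\<in>{0..N}. oracle_diag \<Delta> m a * X (a, m) (b, m) * cnj (oracle_diag \<Delta> m b))"
  unfolding ptrace_def
  using assms by (intro sum.cong refl) (simp add: conj_by_diagonal grover_oracle_offdiag grover_oracle_diag)

lemma ptrace_conj_grover_oracle_diag:
  assumes "a \<in> {1..N}"
  shows "ptrace {0..N} (oracle_query N \<Delta> X) a a = ptrace {0..N} X a a"
proof -
  have unit: "oracle_diag \<Delta> m a * X (a, m) (a, m) * cnj (oracle_diag \<Delta> m a) = X (a, m) (a, m)" for m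
    using oracle_phase_mult_cnj[of \<Delta>] by (simp add: oracle_diag_def mult_ac)
  show ?thesis
    unfolding ptrace_conj_grover_oracle[OF assms assms] unit by (simp add: ptrace_def)
qed

lemma op_trace_grover_Pi:
  assumes "j \<in> {1..N}"
  shows "op_trace ({1..N} \<times> {0..N}) (op_comp ({1..N} \<times> {0..N}) (grover_Pi N j) X) = of_nat N * X (j, j) (j, j)"
proof -
  have "op_comp ({1..N} \<times> {0..N}) (grover_Pi N j) X x x = (if x = (j, j) then of_nat N * X (j, j) x else 0)" for x
    using assms unfolding op_comp_def grover_Pi_def by (simp add: if_distrib[of "\<lambda>u. u * _"] cong: if_cong)
  then show ?thesis using assms by (simp add: op_trace_def)
qed

definition psi0_overlap :: "nat \<Rightarrow> nat op \<Rightarrow> real" where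
  "psi0_overlap N X = Re (\<Sum>a\<in>{1..N}. \<Sum>b\<in>{1..N}. X a b) / N"

lemma psi0_overlap_cong:
  "(\<And>a b. a \<in> {1..N} \<Longrightarrow> b \<in> {1..N} \<Longrightarrow> X a b = Y a b) \<Longrightarrow> psi0_overlap N X = psi0_overlap N Y"
  unfolding psi0_overlap_def by (metis (no_types, lifting) sum.cong)

lemma op_trace_cong:
  "(\<And>a. a \<in> A \<Longrightarrow> X a a = Y a a) \<Longrightarrow> op_trace A X = op_trace A Y"
  unfolding op_trace_def by (rule sum.cong) simp_all

(* Amplitudes on register a and memory m: z / sqrt N on the empty memory m = 0, x / N on every
   other memory, plus y / sqrt N on the diagonal a = m.  ansatz_norm is the squared norm;
   ansatz N 0 0 1 is the final state of an optimal protocol. *)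
definition ansatz :: "nat \<Rightarrow> complex \<Rightarrow> complex \<Rightarrow> complex \<Rightarrow> nat \<times> nat \<Rightarrow> complex" where
  "ansatz N z x y = (\<lambda>(a, m). if m = 0 then z / sqrt N else (x / sqrt N + (if a = m then y else 0)) / sqrt N)"

definition ansatz_norm :: "nat \<Rightarrow> complex \<Rightarrow> complex \<Rightarrow> complex \<Rightarrow> complex" where
  "ansatz_norm N z x y = z * cnj z + x * cnj x + (x * cnj y + y * cnj x) / sqrt N + y * cnj y"

lemma ptrace_outer_ansatz:
  assumes N: "N \<ge> 1" and a: "a \<in> {1..N}" and b: "b \<in> {1..N}"
  shows "ptrace {0..N} (outer (ansatz N z x y)) a b
    = (ansatz_norm N z x y - y * cnj y + of_bool (a = b) * (y * cnj y)) / of_nat N"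
proof -
  define r where "r = complex_of_real (sqrt N)"
  have sq: "of_nat N = r * r" and r0: "r \<noteq> 0" and cr: "cnj r = r"
    using N by (simp_all add: r_def flip: of_real_mult)
  have amp: "ansatz N z x y (a, m) = (if m = 0 then z / r else (x / r + (if a = m then y else 0)) / r)" for a m
    unfolding ansatz_def r_def by simp
  have "{0..N} = insert 0 {1..N}" by auto
  then have "ptrace {0..N} (outer (ansatz N z x y)) a b
    = z * cnj z / (r * r) + (\<Sum>m\<in>{1..N}. ansatz N z x y (a, m) * cnj (ansatz N z x y (b, m)))"
    using cr by (simp add: ptrace_outer amp)
  also have "(\<Sum>m\<in>{1..N}. ansatz N z x y (a, m) * cnj (ansatz N z x y (b, m)))
    = (\<Sum>m\<in>{1..N}. x * cnj x / (r * r * r * r) + (if m = b then x * cnj y / (r * r * r) else 0)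
        + (if m = a then y * cnj x / (r * r * r) else 0) + (if m = a then of_bool (a = b) * (y * cnj y) / (r * r) else 0))"
    using cr r0 by (intro sum.cong refl) (auto simp: amp field_simps)
  also have "\<dots> = of_nat N * (x * cnj x / (r * r * r * r)) + x * cnj y / (r * r * r) + y * cnj x / (r * r * r)
      + of_bool (a = b) * (y * cnj y) / (r * r)"
    using a b by (simp add: sum.distrib)
  finally show ?thesis
    unfolding ansatz_norm_def r_def[symmetric] sq using r0 by (simp add: field_simps)
qed

lemma oracle_diag_ansatz:
  assumes "a \<in> {1..N}"
  shows "oracle_diag \<Delta> m a * ansatz N z x y (a, m)
    = ansatz N z x (oracle_phase \<Delta> * y + (oracle_phase \<Delta> - 1) * x / sqrt N) (a, m)"
  using assms unfolding oracle_diag_def ansatz_def by (auto simp: field_simps)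

lemma ptrace_conj_grover_oracle_ansatz:
  assumes "a \<in> {1..N}" "b \<in> {1..N}"
  shows "ptrace {0..N} (oracle_query N \<Delta> (outer (ansatz N z x y))) a b
    = ptrace {0..N} (outer (ansatz N z x (oracle_phase \<Delta> * y + (oracle_phase \<Delta> - 1) * x / sqrt N))) a b"
  unfolding ptrace_conj_grover_oracle[OF assms] ptrace_outer
    oracle_diag_ansatz[OF assms(1), symmetric] oracle_diag_ansatz[OF assms(2), symmetric]
  by (simp add: outer_def mult_ac)

lemma ansatz_norm_oracle_invariant:
  assumes lam: "lam * cnj lam = 1" and N: "N \<ge> 1"
  shows "ansatz_norm N z x (lam * y + (lam - 1) * x / sqrt N) = ansatz_norm N z x y"
proof -
  define r where "r = complex_of_real (sqrt N)"
  have r0: "r \<noteq> 0" and cr: "cnj r = r" using N by (simp_all add: r_def)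
  have "ansatz_norm N z x (lam * y + (lam - 1) * x / r) * (r * r) = ansatz_norm N z x y * (r * r)"
    unfolding ansatz_norm_def r_def[symmetric] using r0 cr lam
    by (simp add: field_simps) algebra
  then show ?thesis using r0 by (simp add: r_def)
qed

lemma ansatz_norm_unit_phase:
  assumes p: "p * cnj p = 1" and N: "N \<ge> 1"
  shows "ansatz_norm N (of_real z) (of_real t * p - of_real y / sqrt N) (of_real y)
    = of_real (z\<^sup>2 + t\<^sup>2 + y\<^sup>2 - y\<^sup>2 / N)"
proof -
  define r where "r = complex_of_real (sqrt N)"
  have r0: "r \<noteq> 0" and cr: "cnj r = r" and rr: "of_nat N = r * r"
    using N by (simp_all add: r_def flip: of_real_mult)
  have "ansatz_norm N (of_real z) (of_real t * p - of_real y / r) (of_real y) * (r * r)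
      = of_real (z\<^sup>2 + t\<^sup>2 + y\<^sup>2 - y\<^sup>2 / N) * (r * r)"
    unfolding ansatz_norm_def r_def[symmetric] using r0 cr p
    by (simp add: field_simps rr power2_eq_square)
  then show ?thesis using r0 by (simp add: r_def)
qed

section \<open>Angles\<close>

definition step_sin :: "nat \<Rightarrow> real \<Rightarrow> real" where
  "step_sin N \<Delta> = 2 * sin (pi * \<Delta> / 2) * sqrt (real N - 1) / real N"

definition step_angle :: "nat \<Rightarrow> real \<Rightarrow> real" where
  "step_angle N \<Delta> = arcsin (step_sin N \<Delta>)"

definition target_angle :: "nat \<Rightarrow> real" where
  "target_angle N = arccos (1 / sqrt (real N))"

definition optimal_steps :: "nat \<Rightarrow> real \<Rightarrow> nat" where
  "optimal_steps N \<Delta> = nat \<lceil>target_angle N / step_angle N \<Delta>\<rceil>"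

locale grover_params =
  fixes N :: nat and \<Delta> :: real
  assumes N_ge_2: "N \<ge> 2" and \<Delta>_pos: "0 < \<Delta>" and \<Delta>_le_1: "\<Delta> \<le> 1"
begin

abbreviation "\<alpha> \<equiv> target_angle N"
abbreviation "\<beta> \<equiv> step_angle N \<Delta>"
abbreviation "K\<^sub>o\<^sub>p\<^sub>t \<equiv> optimal_steps N \<Delta>"

lemma real_N_ge_2: "real N \<ge> 2"
  using N_ge_2 by simp

lemma N_ge_1: "N \<ge> 1"
  using N_ge_2 by simp

lemma real_N_gt_1: "real N > 1"
  using N_ge_2 by simp

lemma sin_half_pos: "sin (pi * \<Delta> / 2) > 0"
  using \<Delta>_pos \<Delta>_le_1 by (intro sin_gt_zero) auto

lemma cos_target_angle: "cos \<alpha> = 1 / sqrt N"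
  and sin_target_angle: "sin \<alpha> = sqrt (real N - 1) / sqrt N"
  and target_angle_pos: "0 < \<alpha>"
  and target_angle_le: "\<alpha> \<le> pi / 2"
  and target_angle_ge: "pi / 4 \<le> \<alpha>"
proof -
  have isq: "0 < 1 / sqrt N" "1 / sqrt N < 1" using real_N_ge_2 by (auto simp: real_less_rsqrt)
  show cK: "cos \<alpha> = 1 / sqrt N" unfolding target_angle_def by (rule cos_arccos) (use isq in linarith)+
  have "sin \<alpha> = sqrt (1 - (1 / sqrt N)\<^sup>2)" unfolding target_angle_def by (rule sin_arccos) (use isq in linarith)+
  also have "1 - (1 / sqrt N)\<^sup>2 = (real N - 1) / N" using real_N_ge_2 by (simp add: field_simps)
  finally show "sin \<alpha> = sqrt (real N - 1) / sqrt N" by (simp add: real_sqrt_divide)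
  show "0 < \<alpha>" unfolding target_angle_def using arccos_lt_bounded[of "1 / sqrt N"] isq by auto
  show le: "\<alpha> \<le> pi / 2" unfolding target_angle_def using isq by (intro arccos_le_pi2) auto
  have "1 / sqrt (real N) \<le> 1 / sqrt 2" using real_N_ge_2 by (simp add: frac_le)
  also have "1 / sqrt 2 = cos (pi / 4)" by (simp add: cos_45 field_simps)
  finally have "cos \<alpha> \<le> cos (pi / 4)" unfolding cK .
  moreover have "0 \<le> \<alpha>" unfolding target_angle_def by (rule arccos_lbound) (use isq in linarith)+
  ultimately show "pi / 4 \<le> \<alpha>" using le by (subst (asm) cos_mono_le_eq) auto
qed

lemma sin_target_angle_pos: "sin \<alpha> > 0"
  using real_N_ge_2 by (simp add: sin_target_angle)

lemma sin_double_target_angle: "sin (pi - 2 * \<alpha>) = 2 * sqrt (real N - 1) / N"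
proof -
  have "sin (pi - 2 * \<alpha>) = 2 * sin \<alpha> * cos \<alpha>" by (simp add: sin_double)
  then show ?thesis using real_N_ge_2 by (simp add: cos_target_angle sin_target_angle field_simps)
qed

lemma step_sin_pos: "0 < step_sin N \<Delta>"
  using sin_half_pos real_N_ge_2 by (simp add: step_sin_def)

lemma step_sin_le: "step_sin N \<Delta> \<le> sin (pi - 2 * \<alpha>)"
  unfolding sin_double_target_angle step_sin_def using real_N_ge_2
  by (intro divide_right_mono) (simp_all add: mult_left_le)

lemma step_sin_sq: "(step_sin N \<Delta>)\<^sup>2 * (real N)\<^sup>2 = 4 * (sin (pi * \<Delta> / 2))\<^sup>2 * (real N - 1)"
  using real_N_ge_2 by (simp add: step_sin_def power_mult_distrib power_divide)

lemma step_sin_le_1: "step_sin N \<Delta> \<le> 1"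
  using step_sin_le sin_le_one order_trans by blast

lemma sin_step_angle: "sin \<beta> = step_sin N \<Delta>"
  and step_angle_pos: "0 < \<beta>"
  and step_angle_le: "\<beta> \<le> pi / 2"
  and cos_step_angle_nonneg: "0 \<le> cos \<beta>"
proof -
  show "sin \<beta> = step_sin N \<Delta>" unfolding step_angle_def using step_sin_pos step_sin_le_1 by simp
  show "0 < \<beta>" unfolding step_angle_def using step_sin_pos step_sin_le_1 by (simp add: arcsin_less_arcsin[of 0, simplified])
  show "\<beta> \<le> pi / 2" unfolding step_angle_def using step_sin_pos step_sin_le_1 arcsin_le_arcsin[of "step_sin N \<Delta>" 1] by simp
  then show "0 \<le> cos \<beta>" using \<open>0 < \<beta>\<close> by (intro cos_ge_zero) auto
qed

lemma step_angle_le_supplement: "\<beta> \<le> pi - 2 * \<alpha>"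
  using step_sin_le step_angle_pos step_angle_le target_angle_ge target_angle_le
  by (subst (asm) sin_step_angle[symmetric], subst (asm) sin_mono_le_eq) auto

lemma optimal_steps_eq: "real K\<^sub>o\<^sub>p\<^sub>t = of_int \<lceil>\<alpha> / \<beta>\<rceil>"
  using target_angle_pos step_angle_pos by (simp add: optimal_steps_def)

lemma target_angle_le_optimal: "\<alpha> \<le> real K\<^sub>o\<^sub>p\<^sub>t * \<beta>"
proof -
  have "\<alpha> / \<beta> \<le> real K\<^sub>o\<^sub>p\<^sub>t" unfolding optimal_steps_eq by simp
  then show ?thesis using step_angle_pos by (simp add: pos_divide_le_eq)
qed

lemma optimal_steps_le:
  assumes "\<alpha> \<le> real K * \<beta>"
  shows "K\<^sub>o\<^sub>p\<^sub>t \<le> K"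
proof -
  have "\<alpha> / \<beta> \<le> real K" using assms step_angle_pos by (simp add: pos_divide_le_eq)
  then show ?thesis unfolding optimal_steps_def by (simp add: ceiling_le_iff nat_le_iff)
qed

lemma less_optimal_steps:
  assumes "k < K\<^sub>o\<^sub>p\<^sub>t"
  shows "real k * \<beta> < \<alpha>"
proof -
  have "int k < \<lceil>\<alpha> / \<beta>\<rceil>" using assms unfolding optimal_steps_def by linarith
  then have "real k < \<alpha> / \<beta>" by (simp add: less_ceiling_iff)
  then show ?thesis using step_angle_pos by (simp add: pos_less_divide_eq)
qed

lemma sin_step_angle_eq: "sin \<beta> = 2 * sin (pi * \<Delta> / 2) * sin \<alpha> / sqrt N"
  using real_N_ge_2
  by (simp add: sin_step_angle step_sin_def sin_target_angle field_simps real_sqrt_mult[symmetric])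

lemma sin_target_angle_sq: "(sin \<alpha>)\<^sup>2 = 1 - 1 / N"
  using real_N_ge_2 by (simp add: sin_squared_eq cos_target_angle power_divide)

end

section \<open>Lower bound\<close>

context grover_params
begin

lemma block_dual_bound:
  fixes c0 c1 :: real
  assumes psd: "psd_on {1..N} Y" and m: "m \<in> {0..N}" and c0: "c0 \<le> 0" and c01: "1 - c1 - c0 \<ge> 0"
    and pos: "(1 - c1) / N - c0 > 0"
    and ident: "(1 - c1)\<^sup>2 + 4 * (sin (pi * \<Delta> / 2))\<^sup>2 * c1
      = (real N)\<^sup>2 * ((1 - c1) / N - c0) * ((1 - c1) / N - c0 / (real N - 1))"
  shows "c1 * Re (\<Sum>a\<in>{1..N}. \<Sum>b\<in>{1..N}. Y a b) / N + c0 * Re (\<Sum>a\<in>{1..N}. Y a a)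
    \<le> Re (\<Sum>a\<in>{1..N}. \<Sum>b\<in>{1..N}. oracle_diag \<Delta> m a * Y a b * cnj (oracle_diag \<Delta> m b)) / N"
proof (cases "m = 0")
  case True
  then show ?thesis
    using unmarked_block_bound[OF psd N_ge_1 c0 c01] by (simp add: oracle_diag_def)
next
  case False
  have "(cmod (oracle_phase \<Delta> - c1))\<^sup>2
      = (real N)\<^sup>2 * ((1 - c1) / N - c0) * ((1 - c1) / N - c0 / (real N - 1))"
    unfolding norm_oracle_phase_diff_real ident ..
  with False m show ?thesis
    using marked_block_bound[OF psd N_ge_2 _ norm_oracle_phase c0 pos] by (simp add: oracle_diag_def)
qed

lemma overlap_conj_oracle_ge:
  fixes c0 c1 :: real
  assumes psd: "psd_on ({1..N} \<times> {0..N}) X" and c0: "c0 \<le> 0" and c01: "1 - c1 - c0 \<ge> 0"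
    and pos: "(1 - c1) / N - c0 > 0"
    and ident: "(1 - c1)\<^sup>2 + 4 * (sin (pi * \<Delta> / 2))\<^sup>2 * c1
      = (real N)\<^sup>2 * ((1 - c1) / N - c0) * ((1 - c1) / N - c0 / (real N - 1))"
  shows "c1 * psi0_overlap N (ptrace {0..N} X) + c0 * Re (op_trace {1..N} (ptrace {0..N} X))
    \<le> psi0_overlap N (ptrace {0..N} (oracle_query N \<Delta> X))"
proof -
  define Y where "Y m a b = X (a, m) (b, m)" for m a b
  have block: "c1 * Re (\<Sum>a\<in>{1..N}. \<Sum>b\<in>{1..N}. Y m a b) / N + c0 * Re (\<Sum>a\<in>{1..N}. Y m a a)
    \<le> Re (\<Sum>a\<in>{1..N}. \<Sum>b\<in>{1..N}. oracle_diag \<Delta> m a * Y m a b * cnj (oracle_diag \<Delta> m b)) / N"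
    if m: "m \<in> {0..N}" for m
    using block_dual_bound[OF psd_on_block[OF psd _ m] m c0 c01 pos ident] by (simp add: Y_def)
  have "c1 * psi0_overlap N (ptrace {0..N} X) + c0 * Re (op_trace {1..N} (ptrace {0..N} X))
     = (\<Sum>m\<in>{0..N}. c1 * Re (\<Sum>a\<in>{1..N}. \<Sum>b\<in>{1..N}. Y m a b) / N + c0 * Re (\<Sum>a\<in>{1..N}. Y m a a))"
    unfolding psi0_overlap_def op_trace_def ptrace_def Y_def
    by (simp add: sum.swap[of _ "{0..N}"] sum.distrib sum_distrib_left sum_divide_distrib)
  also have "\<dots> \<le> (\<Sum>m\<in>{0..N}. Re (\<Sum>a\<in>{1..N}. \<Sum>b\<in>{1..N}. oracle_diag \<Delta> m a * Y m a b * cnj (oracle_diag \<Delta> m b)) / N)"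
    by (rule sum_mono) (rule block)
  also have "\<dots> = psi0_overlap N (ptrace {0..N} (oracle_query N \<Delta> X))"
  proof -
    have "(\<Sum>a\<in>{1..N}. \<Sum>b\<in>{1..N}. ptrace {0..N} (oracle_query N \<Delta> X) a b)
      = (\<Sum>a\<in>{1..N}. \<Sum>b\<in>{1..N}. \<Sum>m\<in>{0..N}. oracle_diag \<Delta> m a * Y m a b * cnj (oracle_diag \<Delta> m b))"
      unfolding Y_def by (intro sum.cong refl ptrace_conj_grover_oracle)
    then show ?thesis
      unfolding psi0_overlap_def by (simp add: sum.swap[of _ "{0..N}"] sum_divide_distrib)
  qed
  finally show ?thesis .
qed

lemma overlap_step:
  assumes psd: "psd_on ({1..N} \<times> {0..N}) X" and tr: "Re (op_trace {1..N} (ptrace {0..N} X)) = 1"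
    and a: "0 < a" "a + \<beta> \<le> pi / 2"
    and F: "(cos a)\<^sup>2 \<le> psi0_overlap N (ptrace {0..N} X)"
  shows "(cos (a + \<beta>))\<^sup>2 \<le> psi0_overlap N (ptrace {0..N} (oracle_query N \<Delta> X))"
proof -
  define c1 where "c1 = dual_c1 a \<beta>"
  define c0 where "c0 = dual_c0 a \<beta>"
  have "a < pi / 2" using a step_angle_pos by linarith
  then have S: "sin a > 0" and C: "cos a > 0"
    using a by (auto intro: sin_gt_zero cos_gt_zero)
  have Sab: "sin (a + \<beta>) > 0" and Cab: "cos (a + \<beta>) \<ge> 0"
    using a step_angle_pos by (auto intro!: sin_gt_zero cos_ge_zero)
  have sb: "sin \<beta> > 0" using step_sin_pos by (simp add: sin_step_angle)
  have c0: "c0 \<le> 0" unfolding c0_def dual_c0_def using S Cab sb by (simp add: divide_nonneg_pos)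
  have c1: "c1 \<ge> 0" unfolding c1_def dual_c1_def using S C Sab Cab by simp
  have c01: "1 - c1 - c0 > 0"
    unfolding c1_def c0_def one_minus_dual_coeffs[OF S C] using sb Sab C by simp
  have "(1 - c1) / N - c0 = (1 - c1 - c0) / N + (- c0) * (1 - 1 / N)"
    using real_N_ge_2 by (simp add: field_simps)
  moreover have "(- c0) * (1 - 1 / N) \<ge> 0" using c0 real_N_ge_2 by (intro mult_nonneg_nonneg) simp_all
  moreover have "(1 - c1 - c0) / N > 0" using c01 real_N_ge_2 by simp
  ultimately have pos: "(1 - c1) / N - c0 > 0" by linarith
  have "(sin \<beta>)\<^sup>2 * (real N)\<^sup>2 = 4 * (sin (pi * \<Delta> / 2))\<^sup>2 * (real N - 1)"
    unfolding sin_step_angle by (rule step_sin_sq)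
  note ident = dual_coeffs_identity[OF S C real_N_gt_1 this, folded c1_def c0_def]
  have "(cos (a + \<beta>))\<^sup>2 = c1 * (cos a)\<^sup>2 + c0"
    unfolding c1_def c0_def dual_coeffs_cos_sq[OF S C] ..
  also have "\<dots> \<le> c1 * psi0_overlap N (ptrace {0..N} X) + c0 * Re (op_trace {1..N} (ptrace {0..N} X))"
    using mult_left_mono[OF F c1] tr by simp
  also have "\<dots> \<le> psi0_overlap N (ptrace {0..N} (oracle_query N \<Delta> X))"
    using overlap_conj_oracle_ge[OF psd c0 _ pos ident] c01 by simp
  finally show ?thesis .
qed

end

locale grover_run = grover_params +
  fixes K :: nat and \<rho> :: "nat \<Rightarrow> nat op" and \<rho>t :: "nat \<Rightarrow> (nat \<times> nat) op" and \<rho>' :: "(nat \<times> nat) op"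
  assumes protocol: "grover_protocol N \<Delta> K 1 \<rho> \<rho>t \<rho>'"
begin

lemma psd_rho_tilde: "k \<le> K \<Longrightarrow> psd_on ({1..N} \<times> {0..N}) (\<rho>t k)"
  and psd_rho_final: "psd_on ({1..N} \<times> {0..N}) \<rho>'"
  and rho_init: "a \<in> {1..N} \<Longrightarrow> b \<in> {1..N} \<Longrightarrow> \<rho> 0 a b = 1 / of_nat N"
  and ptrace_rho_tilde: "k \<le> K \<Longrightarrow> a \<in> {1..N} \<Longrightarrow> b \<in> {1..N} \<Longrightarrow> ptrace {0..N} (\<rho>t k) a b = \<rho> k a b"
  and rho_step: "k < K \<Longrightarrow> a \<in> {1..N} \<Longrightarrow> b \<in> {1..N} \<Longrightarrow>
     ptrace {0..N} (oracle_query N \<Delta> (\<rho>t k)) a b = \<rho> (Suc k) a b"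
  and ptrace_rho_final: "a \<in> {1..N} \<Longrightarrow> b \<in> {1..N} \<Longrightarrow> ptrace {0..N} \<rho>' a b = \<rho> K a b"
  using protocol real_N_ge_2
  by (auto simp: grover_protocol_def is_protocol_def grover_psi0_def simp flip: of_real_mult)

lemma final_marked_weight:
  assumes j: "j \<in> {1..N}"
  shows "1 / real N \<le> Re (\<rho>' (j, j) (j, j))"
proof -
  have "1 \<le> Re (op_trace ({1..N} \<times> {0..N}) (op_comp ({1..N} \<times> {0..N}) (grover_Pi N j) \<rho>'))"
    using protocol j unfolding grover_protocol_def is_protocol_def by blast
  then show ?thesis
    unfolding op_trace_grover_Pi[OF j] using real_N_ge_2 by (simp add: pos_divide_le_eq mult.commute)
qed

lemma trace_rho: "k \<le> K \<Longrightarrow> op_trace {1..N} (\<rho> k) = 1"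
proof (induction k)
  case 0
  then show ?case using real_N_ge_2 by (simp add: op_trace_cong[of _ _ "\<lambda>_ _. 1 / of_nat N"] rho_init op_trace_def)
next
  case (Suc k)
  have "op_trace {1..N} (\<rho> (Suc k)) = op_trace {1..N} (ptrace {0..N} (\<rho>t k))"
  proof (rule op_trace_cong)
    fix a assume a: "a \<in> {1..N}"
    show "\<rho> (Suc k) a a = ptrace {0..N} (\<rho>t k) a a"
      using rho_step[OF _ a a] ptrace_conj_grover_oracle_diag[OF a] Suc.prems by simp
  qed
  also have "\<dots> = op_trace {1..N} (\<rho> k)"
    using Suc.prems by (intro op_trace_cong) (simp add: ptrace_rho_tilde)
  finally show ?case using Suc by simp
qed

lemma overlap_rho_init: "psi0_overlap N (\<rho> 0) = 1"
  using real_N_ge_2 by (simp add: psi0_overlap_cong[of _ _ "\<lambda>_ _. 1 / of_nat N"] rho_init psi0_overlap_def)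

lemma rho_final_offdiag: "a \<in> {1..N} \<Longrightarrow> b \<in> {1..N} \<Longrightarrow> a \<noteq> b \<Longrightarrow> \<rho> K a b = 0"
proof -
  have "Re (\<Sum>x\<in>{1..N} \<times> {0..N}. \<rho>' x x) = Re (op_trace {1..N} (\<rho> K))"
    unfolding op_trace_def
    by (simp add: sum.cartesian_product' ptrace_rho_final[symmetric] ptrace_def)
  also have "\<dots> = (\<Sum>j\<in>{1..N}. 1 / real N)" using trace_rho real_N_ge_2 by simp
  also have "\<dots> \<le> Re (\<Sum>j\<in>{1..N}. \<rho>' (j, j) (j, j))"
    unfolding Re_sum by (rule sum_mono) (rule final_marked_weight)
  finally show "a \<in> {1..N} \<Longrightarrow> b \<in> {1..N} \<Longrightarrow> a \<noteq> b \<Longrightarrow> \<rho> K a b = 0"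
    using ptrace_offdiag_eq_0_if_diagonal_concentrated[OF psd_rho_final] ptrace_rho_final by fastforce
qed

lemma overlap_rho_final: "psi0_overlap N (\<rho> K) = 1 / N"
proof -
  have "(\<Sum>a\<in>{1..N}. \<Sum>b\<in>{1..N}. \<rho> K a b) = (\<Sum>a\<in>{1..N}. \<Sum>b\<in>{1..N}. if b = a then \<rho> K a a else 0)"
    using rho_final_offdiag by (intro sum.cong refl) auto
  also have "\<dots> = op_trace {1..N} (\<rho> K)" by (simp add: op_trace_def)
  finally show ?thesis using trace_rho by (simp add: psi0_overlap_def)
qed

(* overlap_step needs a positive angle (the dual coefficients divide by sin a), hence the shift
   by \<epsilon> > 0. *)
lemma overlap_rho_lower_bound:
  assumes \<epsilon>: "0 < \<epsilon>" "\<epsilon> + real K * \<beta> \<le> pi / 2"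
  shows "k \<le> K \<Longrightarrow> (cos (\<epsilon> + real k * \<beta>))\<^sup>2 \<le> psi0_overlap N (\<rho> k)"
proof (induction k)
  case 0
  then show ?case by (simp add: overlap_rho_init abs_square_le_1)
next
  case (Suc k)
  have "\<epsilon> + real k * \<beta> + \<beta> \<le> \<epsilon> + real K * \<beta>"
    using mult_right_mono[of "real (Suc k)" "real K" \<beta>] Suc.prems step_angle_pos by (simp add: distrib_right)
  moreover have "0 < \<epsilon> + real k * \<beta>" using \<epsilon> step_angle_pos by (simp add: add_pos_nonneg)
  moreover have "Re (op_trace {1..N} (ptrace {0..N} (\<rho>t k))) = 1"
    using Suc.prems trace_rho[of k] op_trace_cong[of "{1..N}" "ptrace {0..N} (\<rho>t k)" "\<rho> k"] ptrace_rho_tilde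
    by simp
  moreover have "psi0_overlap N (ptrace {0..N} (\<rho>t k)) = psi0_overlap N (\<rho> k)"
    using Suc.prems by (intro psi0_overlap_cong) (simp add: ptrace_rho_tilde)
  moreover have "psi0_overlap N (ptrace {0..N} (oracle_query N \<Delta> (\<rho>t k)))
      = psi0_overlap N (\<rho> (Suc k))"
    using Suc.prems by (intro psi0_overlap_cong rho_step) auto
  ultimately show ?case
    using overlap_step[OF psd_rho_tilde, of k "\<epsilon> + real k * \<beta>"] Suc \<epsilon>
    by (simp add: algebra_simps)
qed

lemma target_angle_le_steps: "\<alpha> \<le> real K * \<beta>"
proof (rule ccontr)
  assume "\<not> \<alpha> \<le> real K * \<beta>"
  define \<epsilon> where "\<epsilon> = (\<alpha> - real K * \<beta>) / 2"
  have \<epsilon>: "0 < \<epsilon>" "\<epsilon> + real K * \<beta> < \<alpha>"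
    using \<open>\<not> \<alpha> \<le> real K * \<beta>\<close> by (simp_all add: \<epsilon>_def field_simps)
  have "0 \<le> real K * \<beta>" using step_angle_pos by simp
  then have "cos \<alpha> < cos (\<epsilon> + real K * \<beta>)"
    using \<epsilon> target_angle_le by (intro cos_monotone_0_pi) auto
  then have "(cos \<alpha>)\<^sup>2 < (cos (\<epsilon> + real K * \<beta>))\<^sup>2"
    using real_N_ge_2 by (intro power_strict_mono) (simp_all add: cos_target_angle)
  also have "\<dots> \<le> psi0_overlap N (\<rho> K)"
    using overlap_rho_lower_bound[OF \<epsilon>(1)] \<epsilon>(2) target_angle_le by simp
  also have "\<dots> = (cos \<alpha>)\<^sup>2"
    using real_N_ge_2 by (simp add: overlap_rho_final cos_target_angle power_divide)
  finally show False by simp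
qed

end

section \<open>An optimal protocol\<close>

context grover_params
begin

(* After k queries the register state is (1 - y\<^sup>2) |psi0><psi0| + y\<^sup>2 I/N with y = amp_y k;
   amp_t k is the size of the aligned part of x that moves y to amp_y (Suc k). *)
definition path_angle :: "nat \<Rightarrow> real" where
  "path_angle k = min (real k * \<beta>) \<alpha>"

definition amp_y :: "nat \<Rightarrow> real" where
  "amp_y k = sin (path_angle k) / sin \<alpha>"

definition amp_t :: "nat \<Rightarrow> real" where
  "amp_t k = (sin (path_angle (Suc k)) - cos \<beta> * sin (path_angle k)) / sin \<beta>"

lemma path_angle_less: "k < K\<^sub>o\<^sub>p\<^sub>t \<Longrightarrow> path_angle k = real k * \<beta>"
  using less_optimal_steps by (simp add: path_angle_def)

lemma path_angle_bounds: "0 \<le> path_angle k" "path_angle k \<le> \<alpha>"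
  using step_angle_pos target_angle_pos by (simp_all add: path_angle_def)

lemma amp_y_nonneg: "0 \<le> amp_y k"
  using path_angle_bounds[of k] target_angle_le sin_target_angle_pos
  by (simp add: amp_y_def sin_ge_zero)

lemma amp_y_0: "amp_y 0 = 0"
  by (simp add: amp_y_def path_angle_def target_angle_pos less_imp_le)

lemma amp_y_optimal: "amp_y K\<^sub>o\<^sub>p\<^sub>t = 1"
  using target_angle_le_optimal sin_target_angle_pos by (simp add: amp_y_def path_angle_def)

lemma amp_t_bounds:
  assumes k: "k < K\<^sub>o\<^sub>p\<^sub>t"
  shows "0 \<le> amp_t k" "amp_t k \<le> cos (path_angle k)"
proof -
  define a where "a = real k * \<beta>"
  define a' where "a' = path_angle (Suc k)"
  have a: "path_angle k = a" unfolding a_def by (rule path_angle_less[OF k])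
  have "a < \<alpha>" unfolding a_def by (rule less_optimal_steps[OF k])
  have "0 \<le> a" unfolding a_def using step_angle_pos by simp
  have a'_eq: "a' = min (a + \<beta>) \<alpha>" unfolding a'_def path_angle_def a_def by (simp add: algebra_simps)
  have "a \<le> a'" "a' \<le> \<alpha>" unfolding a'_eq using \<open>a < \<alpha>\<close> step_angle_pos by simp_all
  have sin_a: "sin a \<ge> 0" using \<open>0 \<le> a\<close> \<open>a < \<alpha>\<close> target_angle_le by (intro sin_ge_zero) auto
  have "sin a \<le> sin a'"
    using \<open>0 \<le> a\<close> \<open>a \<le> a'\<close> \<open>a' \<le> \<alpha>\<close> target_angle_le by (intro sin_monotone_2pi_le) auto
  moreover have "cos \<beta> * sin a \<le> sin a" using mult_right_mono[OF cos_le_one sin_a] by simp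
  ultimately show "0 \<le> amp_t k"
    using step_sin_pos unfolding amp_t_def a'_def[symmetric] a sin_step_angle by simp
  have "sin a' \<le> sin (a + \<beta>)"
  proof (cases "a + \<beta> \<le> pi / 2")
    case True
    then show ?thesis
      using \<open>0 \<le> a\<close> \<open>a \<le> a'\<close> unfolding a'_eq by (intro sin_monotone_2pi_le) auto
  next
    case False
    have "sin a' \<le> sin \<alpha>"
      using \<open>0 \<le> a\<close> \<open>a \<le> a'\<close> \<open>a' \<le> \<alpha>\<close> target_angle_le by (intro sin_monotone_2pi_le) auto
    also have "\<dots> \<le> sin (pi - (a + \<beta>))"
      using False \<open>a < \<alpha>\<close> step_angle_le_supplement target_angle_pos target_angle_le
      by (intro sin_monotone_2pi_le) auto
    finally show ?thesis by simp
  qed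
  then show "amp_t k \<le> cos (path_angle k)"
    using step_sin_pos unfolding amp_t_def a'_def[symmetric] a sin_step_angle[symmetric]
    by (simp add: sin_add field_simps)
qed

definition mu :: complex where
  "mu = oracle_phase \<Delta> - (oracle_phase \<Delta> - 1) / of_nat N"

(* Makes (oracle_phase \<Delta> - 1) * align_phase point in the direction of mu, so that both
   contributions to the new marked amplitude add up in modulus (norm_mu_plus_aligned). *)
definition align_phase :: complex where
  "align_phase = (if mu = 0 then 1 else sgn mu * cnj (sgn (oracle_phase \<Delta> - 1)))"

definition amp_x :: "nat \<Rightarrow> complex" where
  "amp_x k = of_real (amp_t k) * align_phase - of_real (amp_y k) / sqrt N"

definition amp_z :: "nat \<Rightarrow> real" where
  "amp_z k = sqrt ((cos (path_angle k))\<^sup>2 - (amp_t k)\<^sup>2)"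

lemma norm_mu: "cmod mu = cos \<beta>"
proof (rule power2_eq_imp_eq)
  define c where "c = - 1 / (real N - 1)"
  have mu_eq: "mu = of_real ((real N - 1) / N) * (oracle_phase \<Delta> - of_real c)"
    unfolding mu_def c_def using real_N_ge_2 by (simp add: field_simps)
  have "(cmod mu)\<^sup>2 = ((real N - 1) / N)\<^sup>2 * ((1 - c)\<^sup>2 + 4 * (sin (pi * \<Delta> / 2))\<^sup>2 * c)"
    unfolding mu_eq norm_mult norm_of_real power_mult_distrib power2_abs norm_oracle_phase_diff_real ..
  also have "\<dots> = ((real N - 1) / N * (1 - c))\<^sup>2 + ((real N - 1) / N)\<^sup>2 * 4 * (sin (pi * \<Delta> / 2))\<^sup>2 * c"
    by (simp only: power_mult_distrib distrib_left mult.assoc)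
  also have "(real N - 1) / N * (1 - c) = 1"
    using real_N_ge_2 by (simp add: c_def field_simps)
  also have "((real N - 1) / N)\<^sup>2 * 4 * (sin (pi * \<Delta> / 2))\<^sup>2 * c
      = - (4 * (sin (pi * \<Delta> / 2))\<^sup>2 * (real N - 1) / (real N)\<^sup>2)"
    using real_N_ge_2 by (simp add: c_def power2_eq_square field_simps)
  also have "1\<^sup>2 + - (4 * (sin (pi * \<Delta> / 2))\<^sup>2 * (real N - 1) / (real N)\<^sup>2) = (cos \<beta>)\<^sup>2"
    using real_N_ge_2 by (simp add: cos_squared_eq sin_step_angle flip: step_sin_sq)
  finally show "(cmod mu)\<^sup>2 = (cos \<beta>)\<^sup>2" .
qed (simp_all add: cos_step_angle_nonneg)

lemma oracle_phase_ne_1: "oracle_phase \<Delta> \<noteq> 1"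
  using norm_oracle_phase_diff_one[of \<Delta>] \<Delta>_pos \<Delta>_le_1 sin_half_pos by auto

lemma align_phase_unit: "align_phase * cnj align_phase = 1"
proof -
  have "sgn z * cnj (sgn z) = 1" if "z \<noteq> 0" for z :: complex
    using that cnj_mult_self[of "sgn z"] by (simp add: norm_sgn mult.commute)
  then show ?thesis
    using oracle_phase_ne_1 by (simp add: align_phase_def mult_ac)
qed

lemma norm_mu_plus_aligned:
  assumes "0 \<le> y" "0 \<le> t"
  shows "cmod (mu * of_real y + (oracle_phase \<Delta> - 1) * align_phase * of_real t)
    = cmod mu * y + cmod (oracle_phase \<Delta> - 1) * t"
proof (cases "mu = 0")
  case True
  then show ?thesis using assms by (simp add: align_phase_def norm_mult)
next
  case False
  have unit_dir: "z * cnj (sgn z) = of_real (cmod z)" for z :: complex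
    by (cases "z = 0") (simp_all add: sgn_eq complex_norm_square[symmetric] power2_eq_square)
  have "(oracle_phase \<Delta> - 1) * align_phase = ((oracle_phase \<Delta> - 1) * cnj (sgn (oracle_phase \<Delta> - 1))) * sgn mu"
    using False by (simp add: align_phase_def mult_ac)
  also have "\<dots> = of_real (cmod (oracle_phase \<Delta> - 1)) * sgn mu"
    by (simp only: unit_dir)
  finally have "mu * of_real y + (oracle_phase \<Delta> - 1) * align_phase * of_real t
      = (of_real (cmod mu) * sgn mu) * of_real y + (of_real (cmod (oracle_phase \<Delta> - 1)) * sgn mu) * of_real t"
    using False by (simp add: sgn_eq)
  also have "\<dots> = sgn mu * of_real (cmod mu * y + cmod (oracle_phase \<Delta> - 1) * t)"
    by (simp add: algebra_simps)
  finally have eq: "mu * of_real y + (oracle_phase \<Delta> - 1) * align_phase * of_real t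
      = sgn mu * of_real (cmod mu * y + cmod (oracle_phase \<Delta> - 1) * t)" .
  show ?thesis
    unfolding eq norm_mult norm_of_real using False assms by (simp add: norm_sgn)
qed

lemma amp_y_step:
  assumes k: "k < K\<^sub>o\<^sub>p\<^sub>t"
  shows "cmod (oracle_phase \<Delta> * of_real (amp_y k) + (oracle_phase \<Delta> - 1) * amp_x k / sqrt N) = amp_y (Suc k)"
proof -
  define r where "r = complex_of_real (sqrt N)"
  have r0: "r \<noteq> 0" and rr: "(of_nat N :: complex) = r * r"
    using real_N_ge_2 by (simp_all add: r_def flip: of_real_mult)
  have "oracle_phase \<Delta> * of_real (amp_y k) + (oracle_phase \<Delta> - 1) * amp_x k / r
      = mu * of_real (amp_y k) + (oracle_phase \<Delta> - 1) * align_phase * (of_real (amp_t k) / r)"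
  proof -
    have amp_x_r: "amp_x k = of_real (amp_t k) * align_phase - of_real (amp_y k) / r"
      by (simp add: amp_x_def r_def)
    show ?thesis
      unfolding amp_x_r mu_def rr using r0 by (simp add: field_simps)
  qed
  then have "oracle_phase \<Delta> * of_real (amp_y k) + (oracle_phase \<Delta> - 1) * amp_x k / sqrt N
      = mu * of_real (amp_y k) + (oracle_phase \<Delta> - 1) * align_phase * of_real (amp_t k / sqrt N)"
    by (simp add: r_def)
  then have "cmod (oracle_phase \<Delta> * of_real (amp_y k) + (oracle_phase \<Delta> - 1) * amp_x k / sqrt N)
      = cos \<beta> * amp_y k + 2 * sin (pi * \<Delta> / 2) / sqrt N * amp_t k"
    using norm_mu_plus_aligned[OF amp_y_nonneg, of "amp_t k / sqrt N"] amp_t_bounds(1)[OF k]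
      \<Delta>_pos \<Delta>_le_1 by (simp add: norm_mu norm_oracle_phase_diff_one)
  also have "\<dots> = amp_y (Suc k)"
    unfolding sin_step_angle_eq amp_y_def amp_t_def
    using sin_target_angle_pos sin_half_pos real_N_ge_2 by (simp add: field_simps)
  finally show ?thesis .
qed

lemma ansatz_norm_amp:
  assumes k: "k < K\<^sub>o\<^sub>p\<^sub>t"
  shows "ansatz_norm N (of_real (amp_z k)) (amp_x k) (of_real (amp_y k)) = 1"
proof -
  have "(amp_t k)\<^sup>2 \<le> (cos (path_angle k))\<^sup>2"
    using amp_t_bounds[OF k] by (intro power_mono) auto
  then have z: "(amp_z k)\<^sup>2 + (amp_t k)\<^sup>2 = (cos (path_angle k))\<^sup>2" by (simp add: amp_z_def)
  have "(amp_y k)\<^sup>2 - (amp_y k)\<^sup>2 / N = (amp_y k)\<^sup>2 * (sin \<alpha>)\<^sup>2"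
    unfolding sin_target_angle_sq by (simp add: algebra_simps)
  also have "\<dots> = (sin (path_angle k))\<^sup>2"
    using sin_target_angle_pos by (simp add: amp_y_def power_divide)
  finally have y: "(amp_y k)\<^sup>2 - (amp_y k)\<^sup>2 / N = (sin (path_angle k))\<^sup>2" .
  have "ansatz_norm N (of_real (amp_z k)) (amp_x k) (of_real (amp_y k))
      = of_real ((amp_z k)\<^sup>2 + (amp_t k)\<^sup>2 + (amp_y k)\<^sup>2 - (amp_y k)\<^sup>2 / N)"
    unfolding amp_x_def by (rule ansatz_norm_unit_phase[OF align_phase_unit]) (use N_ge_2 in simp)
  also have "(amp_z k)\<^sup>2 + (amp_t k)\<^sup>2 + (amp_y k)\<^sup>2 - (amp_y k)\<^sup>2 / N
      = (cos (path_angle k))\<^sup>2 + (sin (path_angle k))\<^sup>2"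
    using z y by linarith
  finally show ?thesis by simp
qed

definition run_state :: "nat \<Rightarrow> nat \<times> nat \<Rightarrow> complex" where
  "run_state k = (if k < K\<^sub>o\<^sub>p\<^sub>t then ansatz N (of_real (amp_z k)) (amp_x k) (of_real (amp_y k)) else ansatz N 0 0 1)"

definition reduced_state :: "nat \<Rightarrow> nat op" where
  "reduced_state k a b = (1 - of_real ((amp_y k)\<^sup>2) + of_bool (a = b) * of_real ((amp_y k)\<^sup>2)) / of_nat N"

lemma ptrace_run_state:
  assumes "k \<le> K\<^sub>o\<^sub>p\<^sub>t" "a \<in> {1..N}" "b \<in> {1..N}"
  shows "ptrace {0..N} (outer (run_state k)) a b = reduced_state k a b"
proof (cases "k < K\<^sub>o\<^sub>p\<^sub>t")
  case True
  then show ?thesis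
    using assms N_ge_2 ansatz_norm_amp[OF True]
    by (simp add: run_state_def reduced_state_def ptrace_outer_ansatz power2_eq_square)
next
  case False
  with assms have "k = K\<^sub>o\<^sub>p\<^sub>t" by simp
  then show ?thesis
    using assms N_ge_2 amp_y_optimal
    by (simp add: run_state_def reduced_state_def ptrace_outer_ansatz ansatz_norm_def)
qed

lemma ptrace_conj_run_state:
  assumes k: "k < K\<^sub>o\<^sub>p\<^sub>t" and ab: "a \<in> {1..N}" "b \<in> {1..N}"
  shows "ptrace {0..N} (oracle_query N \<Delta> (outer (run_state k))) a b
    = reduced_state (Suc k) a b"
proof -
  define y' where "y' = oracle_phase \<Delta> * of_real (amp_y k) + (oracle_phase \<Delta> - 1) * amp_x k / sqrt N"
  have norm: "ansatz_norm N (of_real (amp_z k)) (amp_x k) y' = 1"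
    unfolding y'_def using ansatz_norm_oracle_invariant[OF oracle_phase_mult_cnj] N_ge_2 ansatz_norm_amp[OF k]
    by simp
  have "y' * cnj y' = of_real ((cmod y')\<^sup>2)"
    by (rule complex_norm_square[symmetric])
  also have "cmod y' = amp_y (Suc k)"
    unfolding y'_def by (rule amp_y_step[OF k])
  finally have marked: "y' * cnj y' = of_real ((amp_y (Suc k))\<^sup>2)" .
  have run: "run_state k = ansatz N (of_real (amp_z k)) (amp_x k) (of_real (amp_y k))"
    using k by (simp add: run_state_def)
  show ?thesis
    unfolding run ptrace_conj_grover_oracle_ansatz[OF ab] y'_def[symmetric] reduced_state_def
      ptrace_outer_ansatz[OF N_ge_1 ab] norm marked
    by simp
qed

lemma optimal_protocol:
  "grover_protocol N \<Delta> K\<^sub>o\<^sub>p\<^sub>t 1 (\<lambda>k. ptrace {0..N} (outer (run_state k))) (\<lambda>k. outer (run_state k))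
    (outer (run_state K\<^sub>o\<^sub>p\<^sub>t))"
  unfolding grover_protocol_def is_protocol_def
proof (intro conjI allI impI ballI)
  fix a b assume ab: "a \<in> {1..N}" "b \<in> {1..N}"
  show "ptrace {0..N} (outer (run_state 0)) a b = grover_psi0 N a * cnj (grover_psi0 N b)"
    using ab real_N_ge_2 by (simp add: ptrace_run_state reduced_state_def amp_y_0 grover_psi0_def flip: of_real_mult)
next
  fix k a b assume "k < K\<^sub>o\<^sub>p\<^sub>t" "a \<in> {1..N}" "b \<in> {1..N}"
  then show "ptrace {0..N} (oracle_query N \<Delta> (outer (run_state k))) a b
      = ptrace {0..N} (outer (run_state (Suc k))) a b"
    using ptrace_conj_run_state[of k a b] ptrace_run_state[of "Suc k" a b] by simp
next
  fix P assume "P \<in> grover_Pi N ` {1..N}"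
  then obtain j where j: "j \<in> {1..N}" and P: "P = grover_Pi N j" by blast
  have "of_nat N * outer (run_state K\<^sub>o\<^sub>p\<^sub>t) (j, j) (j, j) = 1"
    using j real_N_ge_2 by (simp add: run_state_def outer_def ansatz_def flip: of_real_mult)
  then show "1 \<le> Re (op_trace ({1..N} \<times> {0..N}) (op_comp ({1..N} \<times> {0..N}) P (outer (run_state K\<^sub>o\<^sub>p\<^sub>t))))"
    unfolding P op_trace_grover_Pi[OF j] by simp
qed (simp_all add: psd_on_outer psd_on_ptrace)

end

theorem mainTheorem3:
  fixes N :: nat and \<Delta> :: real
  assumes "N > 1" and "0 < \<Delta>" and "\<Delta> \<le> 1"
  defines "Tmin \<equiv> \<Delta> * of_int \<lceil>arccos (1 / sqrt (real N))
                 / arcsin (2 * sin (pi * \<Delta> / 2) * sqrt (real N - 1) / real N)\<rceil>"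
  shows "(\<exists>K \<rho> \<rho>t \<rho>'. Tmin = real K * \<Delta> \<and> grover_protocol N \<Delta> K 1 \<rho> \<rho>t \<rho>') \<and>
         (\<forall>K \<rho> \<rho>t \<rho>'. grover_protocol N \<Delta> K 1 \<rho> \<rho>t \<rho>' \<longrightarrow> Tmin \<le> real K * \<Delta>)"
proof -
  interpret grover_params N \<Delta>
    using assms by unfold_locales auto
  have Tmin: "Tmin = real K\<^sub>o\<^sub>p\<^sub>t * \<Delta>"
    unfolding Tmin_def optimal_steps_eq target_angle_def step_angle_def step_sin_def by simp
  have "\<exists>K \<rho> \<rho>t \<rho>'. Tmin = real K * \<Delta> \<and> grover_protocol N \<Delta> K 1 \<rho> \<rho>t \<rho>'"
    using Tmin optimal_protocol by blast
  moreover have "Tmin \<le> real K * \<Delta>" if "grover_protocol N \<Delta> K 1 \<rho> \<rho>t \<rho>'" for K \<rho> \<rho>t \<rho>'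
  proof -
    interpret grover_run N \<Delta> K \<rho> \<rho>t \<rho>'
      using that by unfold_locales
    show ?thesis
      unfolding Tmin using optimal_steps_le[OF target_angle_le_steps] \<Delta>_pos by simp
  qed
  ultimately show ?thesis by blast
qed

end
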